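(* Let $D\subseteq\mathbb{R}^n$ be a closed convex set containing no line, let $a_1,\dots,a_m\in\mathbb{R}^n$ and $-\infty\le b_i^l\le b_i^u\le+\infty$ for $i\in[m]$, and let $\tilde m\le m$ be the dimension of $\operatorname{span}\{a_1,\dots,a_m\}$. Suppose $\mathcal{H}=D\cap\{x\in\mathbb{R}^n: b_i^l\le\langle a_i,x\rangle\le b_i^u\ \forall i\in[m]\}$ is unbounded. Then every extreme ray of the recession cone $\operatorname{rec}(\mathcal{H})$ is contained in a face of $\operatorname{rec}(D)$ of dimension at most $\tilde m+1$.
   Context: For a closed convex set $D$, its recession cone is $\operatorname{rec}(D)=\{d: x+td\in D\ \forall x\in D,\ t\ge0\}$. A face of a closed convex set $D$ is a convex $F\subseteq D$ such that any segment $[a,b]\subseteq D$ with $(a,b)\cap F\neq\emptyset$ lies in $F$; its dimension is that of its affine hull. An extreme ray of a closed pointed convex cone is a face of it which is a half-line emanating from the origin. *)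

theory Defs
  imports "HOL-Analysis.Analysis" "HOL-Library.Extended_Real"
begin

definition rec_cone :: "'a::real_vector set \<Rightarrow> 'a set" where
  "rec_cone D = {d. \<forall>x\<in>D. \<forall>t::real. t \<ge> 0 \<longrightarrow> x + t *\<^sub>R d \<in> D}"

definition contains_no_line :: "'a::real_vector set \<Rightarrow> bool" where
  "contains_no_line D \<longleftrightarrow> \<not> (\<exists>x d. d \<noteq> 0 \<and> (\<forall>t::real. x + t *\<^sub>R d \<in> D))"

definition extreme_ray :: "'a::real_vector set \<Rightarrow> 'a set \<Rightarrow> bool" where
  "extreme_ray C R \<longleftrightarrow> R face_of C \<and> (\<exists>d. d \<noteq> 0 \<and> R = (\<lambda>t. t *\<^sub>R d) ` {0::real..})"

end

theory Submission
  imports Defs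
begin

text \<open>Let \<open>d\<close> span the extreme ray \<open>R\<close> of \<open>rec(H)\<close>. Then \<open>d \<in> rec(D)\<close>, and we take the face
  \<open>F\<close> of the cone \<open>rec(D)\<close> having \<open>d\<close> in its relative interior; being a face of a cone, \<open>F\<close>
  contains \<open>R\<close>. If \<open>dim F > m' + 1\<close>, where \<open>m'\<close> is the dimension of the span of the
  \<open>a\<^sub>i\<close>, then the directions of \<open>F\<close> orthogonal to all \<open>a\<^sub>i\<close> form a space of dimension
  at least 2, so some such direction \<open>w\<close> is not parallel to \<open>d\<close> and \<open>d \<plusminus> w \<in> F\<close>. Moving along
  \<open>d \<plusminus> w\<close> does not change any \<open>\<langle>a\<^sub>i, x\<rangle>\<close> relative to moving along \<open>d\<close>, so
  \<open>d \<plusminus> w \<in> rec(H)\<close>; as \<open>d\<close> is their midpoint and \<open>R\<close> is a face, \<open>d + w \<in> R\<close>, which makes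
  \<open>w\<close> parallel to \<open>d\<close>.\<close>

lemma conic_rec_cone: "conic (rec_cone D)"
  unfolding conic_def rec_cone_def by (simp add: mult_nonneg_nonneg)

lemma convex_rec_cone:
  assumes "convex D"
  shows "convex (rec_cone D)"
proof (rule convexI)
  fix d e and u v :: real
  assume "d \<in> rec_cone D" "e \<in> rec_cone D" "0 \<le> u" "0 \<le> v" "u + v = 1"
  show "u *\<^sub>R d + v *\<^sub>R e \<in> rec_cone D"
    unfolding rec_cone_def
  proof (intro CollectI ballI allI impI)
    fix x and t :: real
    assume "x \<in> D" "0 \<le> t"
    then have "u *\<^sub>R (x + t *\<^sub>R d) + v *\<^sub>R (x + t *\<^sub>R e) \<in> D"
      using \<open>d \<in> rec_cone D\<close> \<open>e \<in> rec_cone D\<close> \<open>0 \<le> u\<close> \<open>0 \<le> v\<close> \<open>u + v = 1\<close>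
      by (intro convexD[OF assms]) (auto simp: rec_cone_def)
    also have "u *\<^sub>R (x + t *\<^sub>R d) + v *\<^sub>R (x + t *\<^sub>R e) = x + t *\<^sub>R (u *\<^sub>R d + v *\<^sub>R e)"
      using \<open>u + v = 1\<close> by (simp add: algebra_simps flip: scaleR_add_left)
    finally show "x + t *\<^sub>R (u *\<^sub>R d + v *\<^sub>R e) \<in> D" .
  qed
qed

lemma mem_rec_cone_closed_convex:
  fixes D :: "'a::real_normed_vector set"
  assumes "closed D" "convex D" "x\<^sub>0 \<in> D" "\<And>t. t \<ge> 0 \<Longrightarrow> x\<^sub>0 + t *\<^sub>R d \<in> D"
  shows "d \<in> rec_cone D"
  unfolding rec_cone_def
proof (intro CollectI ballI allI impI)
  fix x and t :: real
  assume "x \<in> D" "t \<ge> 0"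
  \<comment> \<open>\<open>f s\<close> lies on the chord from \<open>x\<close> to \<open>x\<^sub>0 + (t/s) d\<close>, and \<open>f 0 = x + t d\<close>.\<close>
  define f where "f s = x + t *\<^sub>R d + s *\<^sub>R (x\<^sub>0 - x)" for s :: real
  have "f s \<in> D" if "s \<in> {0<..1}" for s
  proof -
    have "(1 - s) *\<^sub>R x + s *\<^sub>R (x\<^sub>0 + (t / s) *\<^sub>R d) \<in> D"
      using that \<open>x \<in> D\<close> \<open>t \<ge> 0\<close> by (intro convexD[OF assms(2)] assms(4)) auto
    also have "(1 - s) *\<^sub>R x + s *\<^sub>R (x\<^sub>0 + (t / s) *\<^sub>R d) = f s"
      using that by (simp add: f_def algebra_simps)
    finally show ?thesis .
  qed
  then have "f ` closure {0<..1} \<subseteq> D"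
    by (intro image_closure_subset assms(1)) (auto simp: f_def intro!: continuous_intros)
  then show "x + t *\<^sub>R d \<in> D"
    by (force simp: f_def)
qed

lemma rec_cone_Int_subset:
  fixes D :: "'a::real_normed_vector set"
  assumes "closed D" "convex D" "D \<inter> S \<noteq> {}"
  shows "rec_cone (D \<inter> S) \<subseteq> rec_cone D"
proof
  fix d
  assume d: "d \<in> rec_cone (D \<inter> S)"
  obtain x\<^sub>0 where "x\<^sub>0 \<in> D \<inter> S"
    using assms(3) by blast
  with d show "d \<in> rec_cone D"
    by (intro mem_rec_cone_closed_convex[OF assms(1,2)]) (auto simp: rec_cone_def)
qed

lemma rec_cone_Int_shift:
  assumes "d \<in> rec_cone (D \<inter> S)" "e \<in> rec_cone D" "e - d \<in> rec_cone S"
  shows "e \<in> rec_cone (D \<inter> S)"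
  unfolding rec_cone_def
proof (intro CollectI ballI allI impI)
  fix x and t :: real
  assume "x \<in> D \<inter> S" "t \<ge> 0"
  then have "x + t *\<^sub>R d \<in> S" "x + t *\<^sub>R e \<in> D"
    using assms(1,2) by (auto simp: rec_cone_def)
  then have "(x + t *\<^sub>R d) + t *\<^sub>R (e - d) \<in> S"
    using assms(3) \<open>t \<ge> 0\<close> by (auto simp: rec_cone_def)
  with \<open>x + t *\<^sub>R e \<in> D\<close> show "x + t *\<^sub>R e \<in> D \<inter> S"
    by (simp add: algebra_simps)
qed

lemma mem_rec_cone_inner_constraints:
  assumes "\<And>i. i < m \<Longrightarrow> orthogonal (a i) v"
  shows "v \<in> rec_cone {x. \<forall>i<m. P i (a i \<bullet> x)}"
  using assms by (simp add: rec_cone_def inner_add_right orthogonal_def)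

lemma exists_face_of_rel_interior:
  fixes S :: "'a::euclidean_space set"
  assumes "convex S" "x \<in> S"
  shows "\<exists>F. F face_of S \<and> x \<in> rel_interior F"
  using assms
proof (induction "nat (aff_dim S + 1)" arbitrary: S rule: less_induct)
  case less
  show ?case
  proof (cases "x \<in> rel_interior S")
    case True
    then show ?thesis
      using face_of_refl[OF less.prems(1)] by blast
  next
    case False
    then obtain u where u: "\<And>y. y \<in> S \<Longrightarrow> u \<bullet> x \<le> u \<bullet> y"
      "\<And>y. y \<in> rel_interior S \<Longrightarrow> u \<bullet> x < u \<bullet> y"
      using supporting_hyperplane_rel_boundary[OF less.prems] by metis
    define T where "T = S \<inter> {y. u \<bullet> y = u \<bullet> x}"
    have TS: "T face_of S"
      unfolding T_def using face_of_Int_supporting_hyperplane_ge[OF less.prems(1)] u(1) by blast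
    obtain y where "y \<in> rel_interior S"
      using less.prems rel_interior_eq_empty by blast
    then have "y \<in> S - T"
      using u(2) rel_interior_subset unfolding T_def by fastforce
    then have "aff_dim T < aff_dim S"
      using face_of_aff_dim_lt[OF less.prems(1) TS] by blast
    then have "nat (aff_dim T + 1) < nat (aff_dim S + 1)"
      using aff_dim_geq[of T] by linarith
    moreover have "convex T" "x \<in> T"
      using TS face_of_imp_convex less.prems(2) unfolding T_def by auto
    ultimately obtain F where "F face_of T" "x \<in> rel_interior F"
      using less.hyps by blast
    then show ?thesis
      using face_of_trans[OF _ TS] by blast
  qed
qed

lemma dim_le_dim_Int_orthogonal:
  fixes V :: "'a::euclidean_space set"
  assumes "subspace V"
  shows "dim V \<le> dim (V \<inter> {y. \<forall>a\<in>A. orthogonal a y}) + dim (span A)"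
proof -
  define W where "W = {y. \<forall>a\<in>A. orthogonal a y}"
  have "W = {y \<in> UNIV. \<forall>a\<in>span A. orthogonal a y}"
    unfolding W_def by (auto intro: span_base) (meson orthogonal_commute orthogonal_to_span)
  then have "dim W + dim (span A) = DIM('a)"
    using dim_subspace_orthogonal_to_vectors[of "span A" UNIV] by simp
  moreover have "dim {x + y |x y. x \<in> V \<and> y \<in> W} + dim (V \<inter> W) = dim V + dim W"
    using dim_sums_Int[OF assms subspace_orthogonal_to_vectors] unfolding W_def .
  moreover have "dim {x + y |x y. x \<in> V \<and> y \<in> W} \<le> DIM('a)"
    by (rule dim_subset_UNIV)
  ultimately show ?thesis
    unfolding W_def by linarith
qed

lemma rel_interior_symmetric_perturbation:
  fixes S :: "'a::euclidean_space set"
  assumes "x \<in> rel_interior S" "v \<in> span ((\<lambda>y. y - x) ` S)"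
  obtains e where "e > 0" "x + e *\<^sub>R v \<in> S" "x - e *\<^sub>R v \<in> S"
proof -
  obtain r where "r > 0" and r: "ball x r \<inter> affine hull S \<subseteq> S"
    using assms(1) unfolding mem_rel_interior_ball by blast
  have "x \<in> affine hull S"
    using assms(1) rel_interior_subset by (blast intro: hull_inc)
  have hull: "affine hull S = (\<lambda>y. x + y) ` span ((\<lambda>y. y - x) ` S)"
    using affine_hull_span_gen[OF \<open>x \<in> affine hull S\<close>] by simp
  define e where "e = r / (2 * (norm v + 1))"
  have "norm v + 1 > 0"
    by (simp add: add_nonneg_pos)
  then have "e > 0" "e * (norm v + 1) = r / 2"
    using \<open>r > 0\<close> by (simp_all add: e_def field_simps)
  moreover have "e * norm v \<le> e * (norm v + 1)"
    using \<open>e > 0\<close> by simp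
  ultimately have "e * norm v < r"
    using \<open>r > 0\<close> by linarith
  have "x + c *\<^sub>R v \<in> S" if "\<bar>c\<bar> = e" for c
  proof -
    have "x + c *\<^sub>R v \<in> affine hull S"
      unfolding hull by (rule image_eqI[where x = "c *\<^sub>R v"]) (auto intro: span_mul assms(2))
    moreover have "x + c *\<^sub>R v \<in> ball x r"
      using that \<open>e * norm v < r\<close> by (simp add: dist_norm)
    ultimately show ?thesis
      using r by blast
  qed
  from this[of e] this[of "- e"] show thesis
    using that \<open>e > 0\<close> by simp
qed

lemma rel_interior_orthogonal_perturbation:
  fixes F :: "'a::euclidean_space set"
  assumes "d \<in> rel_interior F" "aff_dim F > int (dim (span A)) + 1"
  obtains w where "w \<notin> span {d}" "\<And>a. a \<in> A \<Longrightarrow> orthogonal a w" "d + w \<in> F" "d - w \<in> F"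
proof -
  define V where "V = span ((\<lambda>y. y - d) ` F)"
  have "d \<in> affine hull F"
    using assms(1) rel_interior_subset by (blast intro: hull_inc)
  then have "aff_dim F = int (dim V)"
    unfolding V_def by (simp add: aff_dim_eq_dim_subtract dim_span)
  then have "card {d} < dim (V \<inter> {y. \<forall>a\<in>A. orthogonal a y})"
    using dim_le_dim_Int_orthogonal[of V A] assms(2) unfolding V_def by simp
  then obtain v where v: "v \<in> V" "\<forall>a\<in>A. orthogonal a v" "v \<notin> span {d}"
    using dim_le_card[of "V \<inter> {y. \<forall>a\<in>A. orthogonal a y}" "{d}"] by force
  obtain e where e: "e > 0" "d + e *\<^sub>R v \<in> F" "d - e *\<^sub>R v \<in> F"
    using rel_interior_symmetric_perturbation[OF assms(1)] v(1) unfolding V_def by blast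
  have "e *\<^sub>R v \<notin> span {d}"
    using v(3) e(1) span_mul[of "e *\<^sub>R v" "{d}" "inverse e"] by auto
  moreover have "orthogonal a (e *\<^sub>R v)" if "a \<in> A" for a
    using v(2) that by (simp add: orthogonal_clauses)
  ultimately show thesis
    using that e(2,3) by blast
qed

lemma face_of_ray_parallel:
  assumes "R face_of K" "R = (\<lambda>t. t *\<^sub>R d) ` {0::real..}" "d + w \<in> K" "d - w \<in> K"
  shows "w \<in> span {d}"
proof (cases "w = 0")
  case False
  have "d \<in> R"
    unfolding assms(2) by (rule image_eqI[of _ _ 1]) auto
  have "midpoint (d + w) (d - w) = d"
    by (simp add: midpoint_def algebra_simps flip: scaleR_add_left)
  moreover have "d + w \<noteq> d - w"
  proof
    assume "d + w = d - w"
    then have "2 *\<^sub>R w = 0"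
      by (simp add: scaleR_2 algebra_simps)
    with False show False
      by simp
  qed
  ultimately have "d \<in> open_segment (d + w) (d - w)"
    using midpoint_in_open_segment[of "d + w" "d - w"] by simp
  then have "d + w \<in> R"
    using face_ofD[OF assms(1) _ assms(3,4) \<open>d \<in> R\<close>] by blast
  then obtain t where "d + w = t *\<^sub>R d"
    unfolding assms(2) by blast
  then have "w = (t - 1) *\<^sub>R d"
    by (simp add: algebra_simps)
  then show ?thesis
    by (simp add: span_base span_mul)
qed (simp add: span_zero)

lemma aff_dim_le_extreme_ray_rel_interior:
  fixes d :: "'a::euclidean_space"
  assumes R: "R face_of rec_cone (D \<inter> S)" "R = (\<lambda>t. t *\<^sub>R d) ` {0..}"
    and F: "F \<subseteq> rec_cone D" "d \<in> rel_interior F"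
    and S: "\<And>w. (\<And>a. a \<in> A \<Longrightarrow> orthogonal a w) \<Longrightarrow> w \<in> rec_cone S"
  shows "aff_dim F \<le> int (dim (span A)) + 1"
proof (rule ccontr)
  assume "\<not> ?thesis"
  then have "aff_dim F > int (dim (span A)) + 1"
    by simp
  then obtain w where w: "w \<notin> span {d}" "\<And>a. a \<in> A \<Longrightarrow> orthogonal a w" "d + w \<in> F" "d - w \<in> F"
    by (rule rel_interior_orthogonal_perturbation[OF F(2)]) auto
  have "d \<in> R"
    unfolding R(2) by (rule image_eqI[of _ _ 1]) auto
  then have dH: "d \<in> rec_cone (D \<inter> S)"
    using face_of_imp_subset[OF R(1)] by blast
  have "(d + w) - d \<in> rec_cone S" "(d - w) - d \<in> rec_cone S"
    using w(2) by (auto intro!: S simp: orthogonal_clauses)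
  then have "d + w \<in> rec_cone (D \<inter> S)" "d - w \<in> rec_cone (D \<inter> S)"
    using w(3,4) F(1) by (auto intro: rec_cone_Int_shift[OF dH])
  then have "w \<in> span {d}"
    using face_of_ray_parallel[OF R] by blast
  with w(1) show False ..
qed

theorem lemma2:
  fixes D :: "'a::euclidean_space set"
    and a :: "nat \<Rightarrow> 'a"
    and bl bu :: "nat \<Rightarrow> ereal"
    and m :: nat
  assumes "closed D" and "convex D" and "contains_no_line D"
    and "\<forall>i<m. bl i \<le> bu i"
    and "\<not> bounded (D \<inter> {x. \<forall>i<m. bl i \<le> ereal (a i \<bullet> x) \<and> ereal (a i \<bullet> x) \<le> bu i})"
  shows "\<forall>R. extreme_ray (rec_cone (D \<inter> {x. \<forall>i<m. bl i \<le> ereal (a i \<bullet> x) \<and> ereal (a i \<bullet> x) \<le> bu i})) R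
           \<longrightarrow> (\<exists>F. F face_of rec_cone D \<and> R \<subseteq> F
                   \<and> aff_dim F \<le> int (dim (span (a ` {..<m}))) + 1)"
proof (intro allI impI)
  let ?S = "{x. \<forall>i<m. bl i \<le> ereal (a i \<bullet> x) \<and> ereal (a i \<bullet> x) \<le> bu i}"
  fix R
  assume "extreme_ray (rec_cone (D \<inter> ?S)) R"
  then obtain d where R: "R face_of rec_cone (D \<inter> ?S)" "R = (\<lambda>t. t *\<^sub>R d) ` {0..}"
    unfolding extreme_ray_def by blast
  have "d \<in> R"
    unfolding R(2) by (rule image_eqI[of _ _ 1]) auto
  then have dH: "d \<in> rec_cone (D \<inter> ?S)"
    using face_of_imp_subset[OF R(1)] by blast
  have "D \<inter> ?S \<noteq> {}"
    using assms(5) by (rule contrapos_nn) simp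
  then have "rec_cone (D \<inter> ?S) \<subseteq> rec_cone D"
    by (rule rec_cone_Int_subset[OF assms(1,2)])
  with dH have "d \<in> rec_cone D"
    by (rule rev_subsetD)
  then obtain F where F: "F face_of rec_cone D" "d \<in> rel_interior F"
    using exists_face_of_rel_interior[OF convex_rec_cone[OF assms(2)]] by blast
  have "conic F"
    by (rule face_of_conic[OF conic_rec_cone F(1)])
  moreover have "d \<in> F"
    using F(2) rel_interior_subset by blast
  ultimately have "R \<subseteq> F"
    unfolding R(2) by (auto intro: conicD)
  moreover have "aff_dim F \<le> int (dim (span (a ` {..<m}))) + 1"
    using F face_of_imp_subset
    by (intro aff_dim_le_extreme_ray_rel_interior[OF R] mem_rec_cone_inner_constraints
        [where P = "\<lambda>i r. bl i \<le> ereal r \<and> ereal r \<le> bu i"]) auto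
  ultimately show "\<exists>F. F face_of rec_cone D \<and> R \<subseteq> F \<and> aff_dim F \<le> int (dim (span (a ` {..<m}))) + 1"
    using F(1) by blast
qed

end
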